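(* For every $\lambda\in\mathcal{P}^+$, $$D\,m_\lambda=\big(\langle\lambda+\rho_g,\lambda+\rho_g\rangle-\langle\rho_g,\rho_g\rangle\big)m_\lambda+\frac{1}{|W_\lambda|}\sum_{\alpha\in R^+}\Big(g_\alpha\langle\lambda,\alpha\rangle\sum_{\ell=1}^{[\langle\lambda,\alpha^\vee\rangle/2]}|W_{\lambda-\ell\alpha}|\,|W^\alpha(\lambda-\ell\alpha)|\,m_{\lambda-\ell\alpha}\Big),$$ where $|W^\alpha(\lambda-\ell\alpha)|$ equals $1$ if $\ell=\langle\lambda,\alpha^\vee\rangle/2$ and $2$ otherwise.
   Context: $E$ is a real Euclidean space (inner product $\langle\cdot,\cdot\rangle$, dimension $N$) spanned by an irreducible, not necessarily reduced, root system $R$ with Weyl group $W$ and positive roots $R^+$; $\alpha^\vee=2\alpha/\langle\alpha,\alpha\rangle$. $\mathcal{P}$ is the weight lattice, $\mathcal{P}^+$ the dominant weights. Formal exponentials $e^\lambda$ ($\lambda\in\mathcal{P}$), $e^\lambda e^\mu=e^{\lambda+\mu}$, realized as functions $e^{i\langle\lambda,x\rangle}$; $m_\lambda=\sum_{\mu\in W(\lambda)}e^\mu$. For $x\in E$, $\partial_x$ is the derivation with $\partial_x e^\lambda=\langle\lambda,x\rangle e^\lambda$; $\partial_\alpha$ means $\partial_x$ with $x=\alpha$. Parameters $g_\alpha$ ($\alpha\in R$) are real numbers with $g_{w(\alpha)}=g_\alpha$ for all $w\in W$. The hypergeometric differential operator is $D=\sum_{j=1}^N\partial_{x_j}^2+\sum_{\alpha\in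 R^+}g_\alpha\frac{1+e^{-\alpha}}{1-e^{-\alpha}}\partial_\alpha$, with $x_1,\dots,x_N$ an orthonormal basis of $E$. $\rho_g=\frac12\sum_{\alpha\in R^+}g_\alpha\alpha$. $W_\mu=\{w\in W\mid w(\mu)=\mu\}$ is the stabilizer; $W^\alpha\subset W$ is the order-2 subgroup generated by the reflection $r_\alpha(x)=x-\langle x,\alpha^\vee\rangle\alpha$, and $W^\alpha(\mu)$ the $W^\alpha$-orbit of $\mu$. $[p]$ denotes the integral part of a nonnegative real number $p$. *)

theory Defs
  imports "HOL-Analysis.Analysis"
begin

definition coroot :: "'a::euclidean_space \<Rightarrow> 'a" where
  "coroot \<alpha> = (2 / (\<alpha> \<bullet> \<alpha>)) *\<^sub>R \<alpha>"

definition refl :: "'a::euclidean_space \<Rightarrow> 'a \<Rightarrow> 'a" where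
  "refl \<alpha> x = x - (x \<bullet> coroot \<alpha>) *\<^sub>R \<alpha>"

definition root_system :: "'a::euclidean_space set \<Rightarrow> bool" where
  "root_system R \<longleftrightarrow> finite R \<and> 0 \<notin> R \<and> span R = UNIV
     \<and> (\<forall>\<alpha>\<in>R. \<forall>\<beta>\<in>R. refl \<alpha> \<beta> \<in> R)
     \<and> (\<forall>\<alpha>\<in>R. \<forall>\<beta>\<in>R. \<beta> \<bullet> coroot \<alpha> \<in> \<int>)"

definition irreducible_rs :: "'a::euclidean_space set \<Rightarrow> bool" where
  "irreducible_rs R \<longleftrightarrow> \<not> (\<exists>A B. A \<union> B = R \<and> A \<inter> B = {} \<and> A \<noteq> {} \<and> B \<noteq> {}
       \<and> (\<forall>a\<in>A. \<forall>b\<in>B. a \<bullet> b = 0))"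

definition positive_system :: "'a::euclidean_space set \<Rightarrow> 'a set \<Rightarrow> bool" where
  "positive_system R Rp \<longleftrightarrow> (\<exists>v. (\<forall>\<alpha>\<in>R. \<alpha> \<bullet> v \<noteq> 0) \<and> Rp = {\<alpha>\<in>R. \<alpha> \<bullet> v > 0})"

inductive_set weyl_group :: "'a::euclidean_space set \<Rightarrow> ('a \<Rightarrow> 'a) set" for R where
  id: "id \<in> weyl_group R"
| step: "w \<in> weyl_group R \<Longrightarrow> \<alpha> \<in> R \<Longrightarrow> refl \<alpha> \<circ> w \<in> weyl_group R"

definition weight_lattice :: "'a::euclidean_space set \<Rightarrow> 'a set" where
  "weight_lattice R = {lam. \<forall>\<alpha>\<in>R. lam \<bullet> coroot \<alpha> \<in> \<int>}"

definition dominant_weights :: "'a::euclidean_space set \<Rightarrow> 'a set \<Rightarrow> 'a set" where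
  "dominant_weights R Rp = {lam\<in>weight_lattice R. \<forall>\<alpha>\<in>Rp. lam \<bullet> coroot \<alpha> \<ge> 0}"

definition stabilizer :: "'a::euclidean_space set \<Rightarrow> 'a \<Rightarrow> ('a \<Rightarrow> 'a) set" where
  "stabilizer R \<mu> = {w\<in>weyl_group R. w \<mu> = \<mu>}"

definition rho_g :: "'a::euclidean_space set \<Rightarrow> ('a \<Rightarrow> real) \<Rightarrow> 'a" where
  "rho_g Rp g = (1/2) *\<^sub>R (\<Sum>\<alpha>\<in>Rp. g \<alpha> *\<^sub>R \<alpha>)"

text \<open>An element of the group algebra is a finitely supported coefficient function
  p :: 'a => real, standing for sum_mu p(mu) e^mu.  It is realized as the function
  x |-> sum_mu p(mu) exp(i <mu,x>).\<close>

definition expo :: "'a::euclidean_space \<Rightarrow> 'a \<Rightarrow> complex" where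
  "expo lam x = exp (\<i> * complex_of_real (lam \<bullet> x))"

definition ev :: "('a::euclidean_space \<Rightarrow> real) \<Rightarrow> 'a \<Rightarrow> complex" where
  "ev p x = (\<Sum>\<mu>\<in>{\<mu>. p \<mu> \<noteq> 0}. complex_of_real (p \<mu>) * expo \<mu> x)"

text \<open>The derivation partial_y with partial_y e^lambda = <lambda,y> e^lambda.\<close>
definition pd :: "'a::euclidean_space \<Rightarrow> ('a \<Rightarrow> real) \<Rightarrow> ('a \<Rightarrow> real)" where
  "pd y p = (\<lambda>\<mu>. (\<mu> \<bullet> y) * p \<mu>)"

definition orbit_sum :: "'a::euclidean_space set \<Rightarrow> 'a \<Rightarrow> ('a \<Rightarrow> real)" where
  "orbit_sum R lam = (\<lambda>\<mu>. if \<mu> \<in> (\<lambda>w. w lam) ` weyl_group R then 1 else 0)"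

text \<open>The hypergeometric operator D applied to p, realized as a function of x
  (defined where no denominator 1 - e^{-alpha} vanishes).\<close>
definition hyp_D :: "'a::euclidean_space set \<Rightarrow> ('a \<Rightarrow> real) \<Rightarrow> ('a \<Rightarrow> real) \<Rightarrow> 'a \<Rightarrow> complex" where
  "hyp_D Rp g p x =
     (\<Sum>b\<in>Basis. ev (pd b (pd b p)) x)
     + (\<Sum>\<alpha>\<in>Rp. complex_of_real (g \<alpha>) * ((1 + expo (-\<alpha>) x) / (1 - expo (-\<alpha>) x)) * ev (pd \<alpha> p) x)"

end

theory Submission
  imports Defs
begin

text \<open>Put \<open>M(\<nu>) = (\<Sum>w\<in>W. e^(w \<nu>)) = |W_\<nu>| m_\<nu>\<close> (\<open>weyl_exp_sum\<close>) and
  \<open>c(\<gamma>) = (1 + e^(-\<gamma>)) / (1 - e^(-\<gamma>))\<close> (\<open>hyp_coeff\<close>).  Since \<open>W\<close> acts orthogonally, the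
  Laplacian multiplies \<open>m_\<lambda>\<close> by \<open>\<langle>\<lambda>,\<lambda>\<rangle>\<close>.  The first-order summand is even in \<open>\<alpha>\<close>, so it may
  be summed over all of \<open>R\<close>, and substituting \<open>\<alpha> = w \<beta>\<close> turns the first-order part into
  \<open>\<Sum>\<beta>. g_\<beta> \<langle>\<lambda>,\<beta>\<rangle> \<Sum>w. c(w \<beta>) e^(w \<lambda>)\<close>.  Replacing \<open>w\<close> by \<open>w r_\<beta>\<close> changes the sign of
  \<open>c(w \<beta>)\<close>; averaging the two expressions and expanding \<open>c(\<gamma>) (1 - q^k)\<close>, \<open>q = e^(-\<gamma>)\<close>, as a
  geometric sum gives \<open>\<Sum>w. c(w \<beta>) e^(w \<lambda>) = M(\<lambda>) + \<Sum>j=1..k-1. M(\<lambda> - j \<beta>)\<close> for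
  \<open>k = \<langle>\<lambda>,\<beta>\<^sup>\<or>\<rangle>\<close>.  Finally \<open>\<lambda> - (k - j) \<beta> = r_\<beta>(\<lambda> - j \<beta>)\<close>, so the terms \<open>j\<close> and \<open>k - j\<close>
  agree and fold into the stated sum over \<open>l \<le> k/2\<close>.\<close>

lemma coroot_inner_self: "(\<alpha>::'a::euclidean_space) \<noteq> 0 \<Longrightarrow> \<alpha> \<bullet> coroot \<alpha> = 2"
  by (simp add: coroot_def)

lemma inner_coroot: "\<nu> \<bullet> coroot \<beta> = 2 * (\<nu> \<bullet> \<beta>) / (\<beta> \<bullet> \<beta>)"
  unfolding coroot_def by simp

lemma linear_refl: "linear (refl \<alpha>)"
  unfolding refl_def by (intro linearI) (auto simp: inner_add_left algebra_simps)

lemma refl_inner_refl: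
  assumes "(\<alpha>::'a::euclidean_space) \<noteq> 0"
  shows "refl \<alpha> x \<bullet> refl \<alpha> y = x \<bullet> y"
  using assms unfolding refl_def coroot_def
  by (simp add: inner_diff_left inner_diff_right algebra_simps inner_commute)

lemma refl_refl:
  assumes "(\<alpha>::'a::euclidean_space) \<noteq> 0"
  shows "refl \<alpha> (refl \<alpha> x) = x"
  using assms unfolding refl_def coroot_def by (simp add: inner_diff_left algebra_simps)

lemma refl_self: "(\<alpha>::'a::euclidean_space) \<noteq> 0 \<Longrightarrow> refl \<alpha> \<alpha> = - \<alpha>"
  unfolding refl_def by (simp add: coroot_inner_self scaleR_2)

lemma refl_diff_scaleR:
  assumes "(\<alpha>::'a::euclidean_space) \<noteq> 0"
  shows "refl \<alpha> (\<nu> - t *\<^sub>R \<alpha>) = \<nu> - (\<nu> \<bullet> coroot \<alpha> - t) *\<^sub>R \<alpha>"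
  unfolding refl_def using coroot_inner_self[OF assms]
  by (simp add: inner_diff_left algebra_simps) (metis mult_2_right scaleR_add_left)

lemma weyl_group_comp:
  assumes "w \<in> weyl_group R" "u \<in> weyl_group R"
  shows "w \<circ> u \<in> weyl_group R"
  using assms(1)
proof induction
  case id
  then show ?case using assms(2) by simp
next
  case (step w \<alpha>)
  then show ?case by (metis comp_assoc weyl_group.step)
qed

lemma refl_in_weyl_group: "\<alpha> \<in> R \<Longrightarrow> refl \<alpha> \<in> weyl_group R"
  using weyl_group.step[OF weyl_group.id, of \<alpha> R] by simp

locale root_sys =
  fixes R :: "'a::euclidean_space set"
  assumes root_system: "root_system R"
begin

lemma finite_roots: "finite R"
  using root_system unfolding root_system_def by auto

lemma root_nonzero: "\<alpha> \<in> R \<Longrightarrow> \<alpha> \<noteq> 0"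
  using root_system unfolding root_system_def by auto

lemma refl_root: "\<alpha> \<in> R \<Longrightarrow> \<beta> \<in> R \<Longrightarrow> refl \<alpha> \<beta> \<in> R"
  using root_system unfolding root_system_def by auto

lemma uminus_root: "\<alpha> \<in> R \<Longrightarrow> - \<alpha> \<in> R"
  by (metis refl_root refl_self root_nonzero)

lemma weyl_group_orthogonal:
  assumes "w \<in> weyl_group R"
  shows "linear w \<and> (\<forall>x y. w x \<bullet> w y = x \<bullet> y) \<and> w ` R \<subseteq> R"
  using assms
proof induction
  case id
  then show ?case by (simp add: linear_id[unfolded id_def])
next
  case (step w \<alpha>)
  have "linear (refl \<alpha> \<circ> w)"
    using step.IH linear_compose linear_refl by blast
  moreover have "refl \<alpha> (w x) \<bullet> refl \<alpha> (w y) = x \<bullet> y" for x y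
    using step.IH refl_inner_refl[OF root_nonzero[OF step.hyps(2)]] by simp
  moreover have "refl \<alpha> (w \<beta>) \<in> R" if "\<beta> \<in> R" for \<beta>
    using step.IH refl_root[OF step.hyps(2)] that by blast
  ultimately show ?case by (auto simp: comp_def)
qed

lemma linear_weyl: "w \<in> weyl_group R \<Longrightarrow> linear w"
  using weyl_group_orthogonal by blast

lemma weyl_inner: "w \<in> weyl_group R \<Longrightarrow> w x \<bullet> w y = x \<bullet> y"
  using weyl_group_orthogonal by blast

lemma weyl_root: "w \<in> weyl_group R \<Longrightarrow> \<beta> \<in> R \<Longrightarrow> w \<beta> \<in> R"
  using weyl_group_orthogonal by blast

lemma weyl_inverse:
  assumes "w \<in> weyl_group R"
  obtains w' where "w' \<in> weyl_group R" "w' \<circ> w = id" "w \<circ> w' = id"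
  using assms
proof (induction arbitrary: thesis)
  case id
  then show ?case using weyl_group.id by fastforce
next
  case (step w \<alpha>)
  obtain w' where w': "w' \<in> weyl_group R" "w' \<circ> w = id" "w \<circ> w' = id"
    using step.IH by blast
  have rr: "refl \<alpha> \<circ> refl \<alpha> = id"
    using refl_refl[OF root_nonzero[OF step.hyps(2)]] by (simp add: fun_eq_iff)
  show ?case
  proof (rule step.prems)
    show "w' \<circ> refl \<alpha> \<in> weyl_group R"
      by (rule weyl_group_comp[OF w'(1) refl_in_weyl_group[OF step.hyps(2)]])
    show "(w' \<circ> refl \<alpha>) \<circ> (refl \<alpha> \<circ> w) = id" "(refl \<alpha> \<circ> w) \<circ> (w' \<circ> refl \<alpha>) = id"
      by (metis comp_assoc rr w'(2,3) comp_id)+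
  qed
qed

lemma inj_weyl: "w \<in> weyl_group R \<Longrightarrow> inj w"
  by (metis weyl_inverse inj_on_id inj_on_imageI2)

lemma weyl_image_roots:
  assumes "w \<in> weyl_group R"
  shows "w ` R = R"
  using endo_inj_surj[OF finite_roots] weyl_group_orthogonal[OF assms]
    inj_on_subset[OF inj_weyl[OF assms]] by blast

lemma finite_weyl_group: "finite (weyl_group R)"
proof -
  have span: "span R = UNIV"
    using root_system unfolding root_system_def by auto
  have "inj_on (\<lambda>w. restrict w R) (weyl_group R)"
  proof (rule inj_onI)
    fix w u assume w: "w \<in> weyl_group R" and u: "u \<in> weyl_group R"
      and eq: "restrict w R = restrict u R"
    have "\<And>y. y \<in> span R \<Longrightarrow> w y = u y"
      using linear_eq_on_span[OF linear_weyl[OF w] linear_weyl[OF u]] eq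
      by (metis restrict_apply')
    then show "w = u" using span by auto
  qed
  moreover have "(\<lambda>w. restrict w R) ` weyl_group R \<subseteq> R \<rightarrow>\<^sub>E R"
    using weyl_root by auto
  moreover have "finite (R \<rightarrow>\<^sub>E R)"
    using finite_roots by (simp add: finite_PiE)
  ultimately show ?thesis by (meson finite_imageD finite_subset)
qed

lemma sum_weyl_comp_right:
  assumes "u \<in> weyl_group R"
  shows "(\<Sum>w\<in>weyl_group R. F (w \<circ> u)) = (\<Sum>w\<in>weyl_group R. F w)"
proof -
  obtain u' where u': "u' \<in> weyl_group R" "u' \<circ> u = id" "u \<circ> u' = id"
    using weyl_inverse[OF assms] by blast
  have "bij_betw (\<lambda>w. w \<circ> u) (weyl_group R) (weyl_group R)"
  proof (rule bij_betw_byWitness[where f' = "\<lambda>w. w \<circ> u'"])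
    show "\<forall>w\<in>weyl_group R. w \<circ> u \<circ> u' = w" "\<forall>w\<in>weyl_group R. w \<circ> u' \<circ> u = w"
      by (simp_all add: comp_assoc u'(2,3))
    show "(\<lambda>w. w \<circ> u) ` weyl_group R \<subseteq> weyl_group R"
      "(\<lambda>w. w \<circ> u') ` weyl_group R \<subseteq> weyl_group R"
      using weyl_group_comp assms u'(1) by blast+
  qed
  then show ?thesis by (rule sum.reindex_bij_betw)
qed

lemma sum_roots_weyl_reindex:
  assumes "w \<in> weyl_group R"
  shows "(\<Sum>\<alpha>\<in>R. F \<alpha>) = (\<Sum>\<beta>\<in>R. F (w \<beta>))"
  using sum.reindex[of w R F] inj_on_subset[OF inj_weyl[OF assms]] weyl_image_roots[OF assms]
  by simp

lemma card_fibre_eq_card_stabilizer: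
  assumes "\<mu> \<in> (\<lambda>w. w \<nu>) ` weyl_group R"
  shows "card {w \<in> weyl_group R. w \<nu> = \<mu>} = card (stabilizer R \<nu>)"
proof -
  obtain w0 where w0: "w0 \<in> weyl_group R" "\<mu> = w0 \<nu>" using assms by blast
  obtain w' where w': "w' \<in> weyl_group R" "w' \<circ> w0 = id" "w0 \<circ> w' = id"
    using weyl_inverse[OF w0(1)] by blast
  have "bij_betw (\<lambda>u. w0 \<circ> u) (stabilizer R \<nu>) {w \<in> weyl_group R. w \<nu> = \<mu>}"
  proof (rule bij_betw_byWitness[where f' = "\<lambda>w. w' \<circ> w"])
    show "\<forall>u\<in>stabilizer R \<nu>. w' \<circ> (w0 \<circ> u) = u" "\<forall>w\<in>{w \<in> weyl_group R. w \<nu> = \<mu>}. w0 \<circ> (w' \<circ> w) = w"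
      by (simp_all add: comp_assoc[symmetric] w'(2,3))
    show "(\<lambda>u. w0 \<circ> u) ` stabilizer R \<nu> \<subseteq> {w \<in> weyl_group R. w \<nu> = \<mu>}"
      using weyl_group_comp[OF w0(1)] w0(2) by (auto simp: stabilizer_def)
    show "(\<lambda>w. w' \<circ> w) ` {w \<in> weyl_group R. w \<nu> = \<mu>} \<subseteq> stabilizer R \<nu>"
      using weyl_group_comp[OF w'(1)] w0(2) w'(2) by (auto simp: stabilizer_def fun_eq_iff)
  qed
  then show ?thesis by (simp add: bij_betw_same_card)
qed

lemma sum_weyl_orbit:
  fixes F :: "'a \<Rightarrow> 'b::comm_semiring_1"
  shows "(\<Sum>w\<in>weyl_group R. F (w \<nu>))
    = of_nat (card (stabilizer R \<nu>)) * (\<Sum>\<mu>\<in>(\<lambda>w. w \<nu>) ` weyl_group R. F \<mu>)"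
proof -
  have "(\<Sum>w\<in>weyl_group R. F (w \<nu>))
      = (\<Sum>\<mu>\<in>(\<lambda>w. w \<nu>) ` weyl_group R. \<Sum>w\<in>{w \<in> weyl_group R. w \<nu> = \<mu>}. F \<mu>)"
    by (rule sum.image_gen[OF finite_weyl_group, THEN trans]) (auto intro!: sum.cong)
  also have "\<dots> = (\<Sum>\<mu>\<in>(\<lambda>w. w \<nu>) ` weyl_group R. of_nat (card (stabilizer R \<nu>)) * F \<mu>)"
    by (intro sum.cong) (simp_all add: card_fibre_eq_card_stabilizer)
  finally show ?thesis by (simp add: sum_distrib_left)
qed

lemma card_stabilizer_pos: "card (stabilizer R \<nu>) > 0"
  using finite_weyl_group weyl_group.id[of R] unfolding stabilizer_def
  by (metis (mono_tags, lifting) card_gt_0_iff empty_iff finite_subset id_apply mem_Collect_eq subsetI)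

lemma invariant_uminus:
  assumes "\<forall>w\<in>weyl_group R. \<forall>\<alpha>\<in>R. g (w \<alpha>) = g \<alpha>" "\<alpha> \<in> R"
  shows "g (- \<alpha>) = g \<alpha>"
  using assms refl_in_weyl_group refl_self[OF root_nonzero] by metis

end

lemma expo_add: "expo (a + b) x = expo a x * expo b x"
  unfolding expo_def by (simp add: inner_add_left distrib_left exp_add)

lemma expo_nonzero: "expo a x \<noteq> 0"
  unfolding expo_def by simp

lemma expo_uminus_mult: "expo (- a) x * expo a x = 1"
  using expo_add[of "- a" a x] by (simp add: expo_def)

lemma expo_diff_scaleR_nat: "expo (a - real k *\<^sub>R b) x = expo a x * expo (- b) x ^ k"
  using expo_add[of a "real k *\<^sub>R (- b)" x]
  by (simp add: expo_def exp_of_nat_mult[symmetric] mult_ac)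

definition hyp_coeff :: "'a::euclidean_space \<Rightarrow> 'a \<Rightarrow> complex" where
  "hyp_coeff x \<alpha> = (1 + expo (- \<alpha>) x) / (1 - expo (- \<alpha>) x)"

lemma hyp_coeff_uminus:
  assumes "expo (- \<alpha>) x \<noteq> 1"
  shows "hyp_coeff x (- \<alpha>) = - hyp_coeff x \<alpha>"
proof -
  define q where "q = expo (- \<alpha>) x"
  have q: "q \<noteq> 0" "1 - q \<noteq> 0" "q - 1 \<noteq> 0"
    using assms expo_nonzero unfolding q_def by auto
  have e: "expo \<alpha> x = inverse q"
    using expo_uminus_mult[of \<alpha> x] unfolding q_def by (simp add: inverse_unique)
  show ?thesis
    unfolding hyp_coeff_def minus_minus q_def[symmetric] e using q by (simp add: field_simps)
qed

lemma geometric_ratio_identity: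
  fixes q :: "'b::field"
  assumes "q \<noteq> 1" "k \<ge> 1"
  shows "(1 + q) / (1 - q) * (1 - q ^ k) = 1 + q ^ k + 2 * (\<Sum>j\<in>{1..<k}. q ^ j)"
proof -
  have "(1 + q) * (1 - q ^ Suc n) = (1 - q) * (1 + q ^ Suc n + 2 * (\<Sum>j\<in>{1..<Suc n}. q ^ j))" for n
    by (induction n) (simp_all add: algebra_simps)
  moreover obtain n where "k = Suc n" using assms(2) by (cases k) auto
  moreover have "1 - q \<noteq> 0" using assms(1) by simp
  ultimately show ?thesis by (simp add: field_simps)
qed

lemma hyp_coeff_mult_diff:
  assumes "expo (- \<gamma>) x \<noteq> 1" "k \<ge> 1"
  shows "hyp_coeff x \<gamma> * (expo \<mu> x - expo (\<mu> - real k *\<^sub>R \<gamma>) x)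
    = expo \<mu> x + expo (\<mu> - real k *\<^sub>R \<gamma>) x + 2 * (\<Sum>j\<in>{1..<k}. expo (\<mu> - real j *\<^sub>R \<gamma>) x)"
proof -
  define q where "q = expo (- \<gamma>) x"
  have "hyp_coeff x \<gamma> * (expo \<mu> x - expo (\<mu> - real k *\<^sub>R \<gamma>) x)
      = expo \<mu> x * ((1 + q) / (1 - q) * (1 - q ^ k))"
    unfolding hyp_coeff_def expo_diff_scaleR_nat q_def
    by (metis mult.left_commute mult.right_neutral right_diff_distrib)
  also have "\<dots> = expo \<mu> x * (1 + q ^ k + 2 * (\<Sum>j\<in>{1..<k}. q ^ j))"
    using geometric_ratio_identity[of q k] assms unfolding q_def by simp
  finally show ?thesis
    unfolding expo_diff_scaleR_nat q_def by (simp add: algebra_simps sum_distrib_left)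
qed

lemma sum_symmetric_fold:
  fixes A :: "nat \<Rightarrow> 'b::semiring_1"
  assumes "\<And>j. 1 \<le> j \<Longrightarrow> j < k \<Longrightarrow> A (k - j) = A j"
  shows "(\<Sum>j\<in>{1..<k}. A j) = (\<Sum>l\<in>{1..k div 2}. (if 2 * l = k then 1 else 2) * A l)"
proof -
  let ?fold = "\<lambda>j. min j (k - j)"
  have image: "?fold ` {1..<k} = {1..k div 2}"
  proof
    show "?fold ` {1..<k} \<subseteq> {1..k div 2}"
      by (auto simp: min_def)
    show "{1..k div 2} \<subseteq> ?fold ` {1..<k}"
    proof
      fix l assume "l \<in> {1..k div 2}"
      then have "?fold l = l" "l \<in> {1..<k}" by (auto simp: min_def)
      then show "l \<in> ?fold ` {1..<k}" by (metis image_eqI)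
    qed
  qed
  have fibre: "{j \<in> {1..<k}. ?fold j = l} = {l, k - l}" if "l \<in> {1..k div 2}" for l
    using that by (intro set_eqI) (simp add: min_def, arith)
  have "(\<Sum>j\<in>{1..<k}. A j) = (\<Sum>l\<in>{1..k div 2}. \<Sum>j\<in>{j \<in> {1..<k}. ?fold j = l}. A j)"
    unfolding image[symmetric] by (rule sum.image_gen) simp
  also have "\<dots> = (\<Sum>l\<in>{1..k div 2}. (if 2 * l = k then 1 else 2) * A l)"
  proof (intro sum.cong refl)
    fix l assume l: "l \<in> {1..k div 2}"
    then have "A (k - l) = A l" using assms by auto
    then show "(\<Sum>j\<in>{j \<in> {1..<k}. ?fold j = l}. A j) = (if 2 * l = k then 1 else 2) * A l"
      unfolding fibre[OF l] by (cases "2 * l = k") (auto simp: mult_2)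
  qed
  finally show ?thesis .
qed

lemma ev_eq_sum_superset:
  "finite S \<Longrightarrow> {\<mu>. p \<mu> \<noteq> 0} \<subseteq> S \<Longrightarrow> ev p x = (\<Sum>\<mu>\<in>S. complex_of_real (p \<mu>) * expo \<mu> x)"
  unfolding ev_def by (rule sum.mono_neutral_left) auto

context root_sys
begin

lemma finite_orbit: "finite ((\<lambda>w. w \<nu>) ` weyl_group R)"
  using finite_weyl_group by blast

lemma ev_orbit_sum:
  "ev (orbit_sum R \<nu>) x = (\<Sum>\<mu>\<in>(\<lambda>w. w \<nu>) ` weyl_group R. expo \<mu> x)"
  by (subst ev_eq_sum_superset[OF finite_orbit]) (auto simp: orbit_sum_def intro!: sum.cong)

lemma ev_pd_orbit_sum:
  "ev (pd y (orbit_sum R \<nu>)) x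
    = (\<Sum>\<mu>\<in>(\<lambda>w. w \<nu>) ` weyl_group R. complex_of_real (\<mu> \<bullet> y) * expo \<mu> x)"
  by (subst ev_eq_sum_superset[OF finite_orbit]) (auto simp: orbit_sum_def pd_def intro!: sum.cong)

lemma ev_pd_pd_orbit_sum:
  "ev (pd y (pd y (orbit_sum R \<nu>))) x
    = (\<Sum>\<mu>\<in>(\<lambda>w. w \<nu>) ` weyl_group R. complex_of_real ((\<mu> \<bullet> y) * (\<mu> \<bullet> y)) * expo \<mu> x)"
  by (subst ev_eq_sum_superset[OF finite_orbit]) (auto simp: orbit_sum_def pd_def intro!: sum.cong)

definition weyl_exp_sum :: "'a \<Rightarrow> 'a \<Rightarrow> complex" where
  "weyl_exp_sum \<nu> x = (\<Sum>w\<in>weyl_group R. expo (w \<nu>) x)"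

lemma weyl_exp_sum_eq: "weyl_exp_sum \<nu> x = of_nat (card (stabilizer R \<nu>)) * ev (orbit_sum R \<nu>) x"
  unfolding weyl_exp_sum_def ev_orbit_sum by (rule sum_weyl_orbit)

lemma weyl_exp_sum_refl: "\<alpha> \<in> R \<Longrightarrow> weyl_exp_sum (refl \<alpha> \<nu>) x = weyl_exp_sum \<nu> x"
  unfolding weyl_exp_sum_def
  using sum_weyl_comp_right[OF refl_in_weyl_group, of \<alpha> "\<lambda>w. expo (w \<nu>) x"] by simp

lemma laplacian_orbit_sum:
  "(\<Sum>b\<in>Basis. ev (pd b (pd b (orbit_sum R lam))) x) = complex_of_real (lam \<bullet> lam) * ev (orbit_sum R lam) x"
proof -
  have "(\<Sum>b\<in>Basis. ev (pd b (pd b (orbit_sum R lam))) x)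
      = (\<Sum>\<mu>\<in>(\<lambda>w. w lam) ` weyl_group R. complex_of_real (\<Sum>b\<in>Basis. (\<mu> \<bullet> b) * (\<mu> \<bullet> b)) * expo \<mu> x)"
    unfolding ev_pd_pd_orbit_sum by (subst sum.swap) (simp add: sum_distrib_right)
  also have "\<dots> = (\<Sum>\<mu>\<in>(\<lambda>w. w lam) ` weyl_group R. complex_of_real (lam \<bullet> lam) * expo \<mu> x)"
    by (intro sum.cong) (auto simp: euclidean_inner[symmetric] weyl_inner)
  finally show ?thesis unfolding ev_orbit_sum by (simp add: sum_distrib_left)
qed

lemma sum_weyl_hyp_coeff_refl:
  assumes "\<forall>\<gamma>\<in>R. expo (- \<gamma>) x \<noteq> 1" "\<beta> \<in> R"
  shows "(\<Sum>w\<in>weyl_group R. hyp_coeff x (w \<beta>) * expo (w (refl \<beta> \<nu>)) x)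
    = - (\<Sum>w\<in>weyl_group R. hyp_coeff x (w \<beta>) * expo (w \<nu>) x)"
proof -
  have "(\<Sum>w\<in>weyl_group R. hyp_coeff x (w \<beta>) * expo (w (refl \<beta> \<nu>)) x)
      = (\<Sum>w\<in>weyl_group R. hyp_coeff x (w (refl \<beta> \<beta>)) * expo (w (refl \<beta> (refl \<beta> \<nu>))) x)"
    using sum_weyl_comp_right[OF refl_in_weyl_group[OF assms(2)],
        of "\<lambda>w. hyp_coeff x (w \<beta>) * expo (w (refl \<beta> \<nu>)) x"] by simp
  also have "\<dots> = (\<Sum>w\<in>weyl_group R. - (hyp_coeff x (w \<beta>) * expo (w \<nu>) x))"
  proof (intro sum.cong refl)
    fix w assume w: "w \<in> weyl_group R"
    have "expo (- w \<beta>) x \<noteq> 1"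
      using assms weyl_root[OF w] by blast
    then have "hyp_coeff x (w (refl \<beta> \<beta>)) = - hyp_coeff x (w \<beta>)"
      using hyp_coeff_uminus linear_neg[OF linear_weyl[OF w]]
      by (simp add: refl_self root_nonzero assms(2))
    then show "hyp_coeff x (w (refl \<beta> \<beta>)) * expo (w (refl \<beta> (refl \<beta> \<nu>))) x
        = - (hyp_coeff x (w \<beta>) * expo (w \<nu>) x)"
      by (simp add: refl_refl root_nonzero assms(2))
  qed
  finally show ?thesis by (simp add: sum_negf)
qed

lemma sum_weyl_hyp_coeff_string:
  assumes "\<forall>\<gamma>\<in>R. expo (- \<gamma>) x \<noteq> 1" "\<beta> \<in> R"
    and "\<nu> \<bullet> coroot \<beta> = real k" "k \<ge> 1"
  shows "(\<Sum>w\<in>weyl_group R. hyp_coeff x (w \<beta>) * expo (w \<nu>) x)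
    = weyl_exp_sum \<nu> x + (\<Sum>j\<in>{1..<k}. weyl_exp_sum (\<nu> - real j *\<^sub>R \<beta>) x)"
proof -
  let ?S = "\<Sum>w\<in>weyl_group R. hyp_coeff x (w \<beta>) * expo (w \<nu>) x"
  have refl_\<nu>: "refl \<beta> \<nu> = \<nu> - real k *\<^sub>R \<beta>"
    unfolding refl_def assms(3) ..
  have string: "hyp_coeff x (w \<beta>) * (expo (w \<nu>) x - expo (w (refl \<beta> \<nu>)) x)
      = expo (w \<nu>) x + expo (w (refl \<beta> \<nu>)) x + 2 * (\<Sum>j\<in>{1..<k}. expo (w (\<nu> - real j *\<^sub>R \<beta>)) x)"
    if w: "w \<in> weyl_group R" for w
    using hyp_coeff_mult_diff[of "w \<beta>" x k "w \<nu>"] assms(1,4) weyl_root[OF w assms(2)]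
    unfolding refl_\<nu> linear_diff[OF linear_weyl[OF w]] linear_cmul[OF linear_weyl[OF w]]
    by simp
  have "2 * ?S = ?S - (\<Sum>w\<in>weyl_group R. hyp_coeff x (w \<beta>) * expo (w (refl \<beta> \<nu>)) x)"
    unfolding sum_weyl_hyp_coeff_refl[OF assms(1,2)] by simp
  also have "\<dots> = (\<Sum>w\<in>weyl_group R. expo (w \<nu>) x + expo (w (refl \<beta> \<nu>)) x
      + 2 * (\<Sum>j\<in>{1..<k}. expo (w (\<nu> - real j *\<^sub>R \<beta>)) x))"
    by (simp add: string sum_subtractf[symmetric] right_diff_distrib[symmetric])
  also have "\<dots> = 2 * (weyl_exp_sum \<nu> x + (\<Sum>j\<in>{1..<k}. weyl_exp_sum (\<nu> - real j *\<^sub>R \<beta>) x))"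
    using weyl_exp_sum_refl[OF assms(2), of \<nu> x]
    by (simp add: weyl_exp_sum_def sum.distrib sum_distrib_left sum.swap[of _ "weyl_group R"] algebra_simps)
  finally show ?thesis by (rule mult_left_cancel[THEN iffD1, rotated]) simp
qed

lemma sum_string_fold:
  assumes "\<alpha> \<in> R" "lam \<bullet> coroot \<alpha> = real k"
  shows "(\<Sum>l\<in>{1..k div 2}.
      complex_of_real (real (card (stabilizer R (lam - real l *\<^sub>R \<alpha>)))
        * real (card {lam - real l *\<^sub>R \<alpha>, refl \<alpha> (lam - real l *\<^sub>R \<alpha>)}))
      * ev (orbit_sum R (lam - real l *\<^sub>R \<alpha>)) x)
    = (\<Sum>j\<in>{1..<k}. weyl_exp_sum (lam - real j *\<^sub>R \<alpha>) x)"
proof -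
  have string_refl: "refl \<alpha> (lam - real l *\<^sub>R \<alpha>) = lam - real (k - l) *\<^sub>R \<alpha>" if "l \<le> k" for l
    using refl_diff_scaleR[OF root_nonzero[OF assms(1)]] assms(2) that by (simp add: of_nat_diff)
  have card_pair: "card {lam - real l *\<^sub>R \<alpha>, refl \<alpha> (lam - real l *\<^sub>R \<alpha>)} = (if 2 * l = k then 1 else 2)"
    if "l \<le> k" for l
  proof -
    have "lam - real l *\<^sub>R \<alpha> = lam - real (k - l) *\<^sub>R \<alpha> \<longleftrightarrow> 2 * l = k"
      using root_nonzero[OF assms(1)] that by (auto simp: scaleR_cancel_right)
    then show ?thesis unfolding string_refl[OF that] by auto
  qed
  have "(\<Sum>l\<in>{1..k div 2}.
      complex_of_real (real (card (stabilizer R (lam - real l *\<^sub>R \<alpha>)))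
        * real (card {lam - real l *\<^sub>R \<alpha>, refl \<alpha> (lam - real l *\<^sub>R \<alpha>)}))
      * ev (orbit_sum R (lam - real l *\<^sub>R \<alpha>)) x)
    = (\<Sum>l\<in>{1..k div 2}. (if 2 * l = k then 1 else 2) * weyl_exp_sum (lam - real l *\<^sub>R \<alpha>) x)"
    by (intro sum.cong) (auto simp: card_pair weyl_exp_sum_eq)
  also have "\<dots> = (\<Sum>j\<in>{1..<k}. weyl_exp_sum (lam - real j *\<^sub>R \<alpha>) x)"
    using string_refl weyl_exp_sum_refl[OF assms(1)]
    by (intro sum_symmetric_fold[symmetric]) (metis less_or_eq_imp_le)
  finally show ?thesis .
qed

end

lemma dominant_coroot_nat:
  assumes "lam \<in> dominant_weights R Rp" "Rp \<subseteq> R" "\<alpha> \<in> Rp"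
  shows "lam \<bullet> coroot \<alpha> = real (nat \<lfloor>lam \<bullet> coroot \<alpha>\<rfloor>)"
proof -
  have "lam \<bullet> coroot \<alpha> \<in> \<int>"
    using assms unfolding dominant_weights_def weight_lattice_def by auto
  then obtain z where z: "lam \<bullet> coroot \<alpha> = of_int z"
    by (rule Ints_cases)
  moreover have "lam \<bullet> coroot \<alpha> \<ge> 0"
    using assms unfolding dominant_weights_def by auto
  ultimately show ?thesis by simp
qed

lemma nat_floor_half: "c = real k \<Longrightarrow> nat \<lfloor>c / 2\<rfloor> = k div 2"
  using floor_divide_of_nat_eq[of k 2, where 'a = real] by simp

lemma rho_g_shift_norm:
  "(lam + rho_g Rp g) \<bullet> (lam + rho_g Rp g) - rho_g Rp g \<bullet> rho_g Rp g
    = lam \<bullet> lam + (\<Sum>\<alpha>\<in>Rp. g \<alpha> * (lam \<bullet> \<alpha>))"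
  unfolding rho_g_def
  by (simp add: inner_add_left inner_add_right inner_sum_right inner_commute algebra_simps)

locale hypergeometric = root_sys +
  fixes Rp :: "'a set" and g :: "'a \<Rightarrow> real" and x :: 'a
  assumes positive_system: "positive_system R Rp"
    and invariant: "\<forall>w\<in>weyl_group R. \<forall>\<alpha>\<in>R. g (w \<alpha>) = g \<alpha>"
    and regular: "\<forall>\<alpha>\<in>Rp. expo (- \<alpha>) x \<noteq> 1"
begin

lemma positive_roots_subset: "Rp \<subseteq> R"
  using positive_system unfolding positive_system_def by auto

lemma positive_iff_uminus_not_positive: "\<alpha> \<in> R \<Longrightarrow> \<alpha> \<in> Rp \<longleftrightarrow> - \<alpha> \<notin> Rp"
  using positive_system uminus_root unfolding positive_system_def
  by (auto simp: linorder_neq_iff)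

lemma regular_root: "\<forall>\<gamma>\<in>R. expo (- \<gamma>) x \<noteq> 1"
proof
  fix \<gamma> assume "\<gamma> \<in> R"
  then consider "\<gamma> \<in> Rp" | "- \<gamma> \<in> Rp"
    using positive_iff_uminus_not_positive by blast
  then show "expo (- \<gamma>) x \<noteq> 1"
    using regular expo_uminus_mult[of \<gamma> x] by cases fastforce+
qed

lemma sum_roots_even:
  fixes h :: "'a \<Rightarrow> 'b::comm_semiring_1"
  assumes "\<And>\<alpha>. \<alpha> \<in> R \<Longrightarrow> h (- \<alpha>) = h \<alpha>"
  shows "(\<Sum>\<alpha>\<in>R. h \<alpha>) = 2 * (\<Sum>\<alpha>\<in>Rp. h \<alpha>)"
proof -
  have R: "R = Rp \<union> uminus ` Rp"
  proof (intro equalityI subsetI)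
    fix \<alpha> assume "\<alpha> \<in> R"
    then show "\<alpha> \<in> Rp \<union> uminus ` Rp"
      using positive_iff_uminus_not_positive by (metis UnI1 UnI2 image_eqI minus_minus)
  next
    fix \<alpha> assume "\<alpha> \<in> Rp \<union> uminus ` Rp"
    then show "\<alpha> \<in> R"
      using positive_roots_subset uminus_root by auto
  qed
  have "Rp \<inter> uminus ` Rp = {}"
    using positive_roots_subset positive_iff_uminus_not_positive by auto
  moreover have "finite Rp"
    using finite_roots positive_roots_subset by (rule finite_subset[rotated])
  ultimately have "(\<Sum>\<alpha>\<in>R. h \<alpha>) = (\<Sum>\<alpha>\<in>Rp. h \<alpha>) + (\<Sum>\<alpha>\<in>Rp. h (- \<alpha>))"
    by (subst R, subst sum.union_disjoint) (auto simp: sum.reindex inj_on_def)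
  also have "(\<Sum>\<alpha>\<in>Rp. h (- \<alpha>)) = (\<Sum>\<alpha>\<in>Rp. h \<alpha>)"
    using assms positive_roots_subset by (intro sum.cong) auto
  finally show ?thesis by (simp add: mult_2)
qed

lemma sum_roots_first_order:
  "(\<Sum>\<alpha>\<in>R. complex_of_real (g \<alpha>) * hyp_coeff x \<alpha>
      * (\<Sum>w\<in>weyl_group R. complex_of_real (w lam \<bullet> \<alpha>) * expo (w lam) x))
    = (\<Sum>\<beta>\<in>R. complex_of_real (g \<beta> * (lam \<bullet> \<beta>))
      * (\<Sum>w\<in>weyl_group R. hyp_coeff x (w \<beta>) * expo (w lam) x))"
proof -
  have "(\<Sum>\<alpha>\<in>R. complex_of_real (g \<alpha>) * hyp_coeff x \<alpha>
      * (\<Sum>w\<in>weyl_group R. complex_of_real (w lam \<bullet> \<alpha>) * expo (w lam) x))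
    = (\<Sum>w\<in>weyl_group R. \<Sum>\<alpha>\<in>R.
        complex_of_real (g \<alpha>) * hyp_coeff x \<alpha> * complex_of_real (w lam \<bullet> \<alpha>) * expo (w lam) x)"
    by (subst sum.swap) (simp add: sum_distrib_left mult_ac)
  also have "\<dots> = (\<Sum>w\<in>weyl_group R. \<Sum>\<beta>\<in>R.
        complex_of_real (g \<beta> * (lam \<bullet> \<beta>)) * (hyp_coeff x (w \<beta>) * expo (w lam) x))"
  proof (rule sum.cong[OF refl])
    fix w assume w: "w \<in> weyl_group R"
    show "(\<Sum>\<alpha>\<in>R. complex_of_real (g \<alpha>) * hyp_coeff x \<alpha> * complex_of_real (w lam \<bullet> \<alpha>) * expo (w lam) x)
      = (\<Sum>\<beta>\<in>R. complex_of_real (g \<beta> * (lam \<bullet> \<beta>)) * (hyp_coeff x (w \<beta>) * expo (w lam) x))"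
      using invariant w by (subst sum_roots_weyl_reindex[OF w]) (auto simp: weyl_inner[OF w] mult_ac intro!: sum.cong)
  qed
  also have "\<dots> = (\<Sum>\<beta>\<in>R. complex_of_real (g \<beta> * (lam \<bullet> \<beta>))
      * (\<Sum>w\<in>weyl_group R. hyp_coeff x (w \<beta>) * expo (w lam) x))"
    by (subst sum.swap) (simp add: sum_distrib_left)
  finally show ?thesis .
qed

lemma first_order_orbit_sum:
  "(\<Sum>\<alpha>\<in>Rp. complex_of_real (g \<alpha>) * ((1 + expo (- \<alpha>) x) / (1 - expo (- \<alpha>) x))
      * ev (pd \<alpha> (orbit_sum R lam)) x)
    = complex_of_real (1 / real (card (stabilizer R lam)))
      * (\<Sum>\<beta>\<in>Rp. complex_of_real (g \<beta> * (lam \<bullet> \<beta>))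
        * (\<Sum>w\<in>weyl_group R. hyp_coeff x (w \<beta>) * expo (w lam) x))"
  (is "?lhs = _")
proof -
  define h where "h \<alpha> = complex_of_real (g \<alpha>) * hyp_coeff x \<alpha>
      * (\<Sum>w\<in>weyl_group R. complex_of_real (w lam \<bullet> \<alpha>) * expo (w lam) x)" for \<alpha>
  define G where "G \<beta> = complex_of_real (g \<beta> * (lam \<bullet> \<beta>))
      * (\<Sum>w\<in>weyl_group R. hyp_coeff x (w \<beta>) * expo (w lam) x)" for \<beta>
  have ev_pd: "ev (pd \<alpha> (orbit_sum R lam)) x = complex_of_real (1 / real (card (stabilizer R lam)))
      * (\<Sum>w\<in>weyl_group R. complex_of_real (w lam \<bullet> \<alpha>) * expo (w lam) x)" for \<alpha>
    unfolding ev_pd_orbit_sum sum_weyl_orbit[of "\<lambda>\<mu>. complex_of_real (\<mu> \<bullet> \<alpha>) * expo \<mu> x"]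
    using card_stabilizer_pos[of lam] by simp
  have "(\<Sum>\<alpha>\<in>R. h \<alpha>) = 2 * (\<Sum>\<alpha>\<in>Rp. h \<alpha>)"
  proof (rule sum_roots_even)
    fix \<alpha> assume \<alpha>: "\<alpha> \<in> R"
    then have "hyp_coeff x (- \<alpha>) = - hyp_coeff x \<alpha>"
      using regular_root hyp_coeff_uminus by blast
    then show "h (- \<alpha>) = h \<alpha>"
      unfolding h_def invariant_uminus[OF invariant \<alpha>] by (simp add: sum_negf)
  qed
  moreover have "(\<Sum>\<beta>\<in>R. G \<beta>) = 2 * (\<Sum>\<beta>\<in>Rp. G \<beta>)"
  proof (rule sum_roots_even)
    fix \<beta> assume \<beta>: "\<beta> \<in> R"
    have "hyp_coeff x (w (- \<beta>)) = - hyp_coeff x (w \<beta>)" if w: "w \<in> weyl_group R" for w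
      using hyp_coeff_uminus[of "w \<beta>" x] regular_root weyl_root[OF w \<beta>] linear_neg[OF linear_weyl[OF w]]
      by simp
    then show "G (- \<beta>) = G \<beta>"
      unfolding G_def invariant_uminus[OF invariant \<beta>] by (simp add: sum_negf)
  qed
  moreover have "(\<Sum>\<alpha>\<in>R. h \<alpha>) = (\<Sum>\<beta>\<in>R. G \<beta>)"
    unfolding h_def G_def by (rule sum_roots_first_order)
  ultimately have half: "(\<Sum>\<alpha>\<in>Rp. h \<alpha>) = (\<Sum>\<beta>\<in>Rp. G \<beta>)" by simp
  have "?lhs = complex_of_real (1 / real (card (stabilizer R lam))) * (\<Sum>\<alpha>\<in>Rp. h \<alpha>)"
    unfolding ev_pd h_def hyp_coeff_def[symmetric] by (simp add: sum_distrib_left mult_ac)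
  then show ?thesis
    unfolding half G_def .
qed

lemma sum_weyl_hyp_coeff_dominant:
  assumes "lam \<in> dominant_weights R Rp" "\<beta> \<in> Rp"
  shows "complex_of_real (g \<beta> * (lam \<bullet> \<beta>)) * (\<Sum>w\<in>weyl_group R. hyp_coeff x (w \<beta>) * expo (w lam) x)
    = complex_of_real (g \<beta> * (lam \<bullet> \<beta>))
      * (weyl_exp_sum lam x + (\<Sum>j\<in>{1..<nat \<lfloor>lam \<bullet> coroot \<beta>\<rfloor>}. weyl_exp_sum (lam - real j *\<^sub>R \<beta>) x))"
proof -
  have k: "lam \<bullet> coroot \<beta> = real (nat \<lfloor>lam \<bullet> coroot \<beta>\<rfloor>)"
    using dominant_coroot_nat[OF assms(1) positive_roots_subset assms(2)] .
  have \<beta>: "\<beta> \<in> R"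
    using assms(2) positive_roots_subset by blast
  show ?thesis
  proof (cases "nat \<lfloor>lam \<bullet> coroot \<beta>\<rfloor> \<ge> 1")
    case True
    then show ?thesis
      using sum_weyl_hyp_coeff_string[OF regular_root \<beta> k] by simp
  next
    case False
    then have "lam \<bullet> coroot \<beta> = 0"
      using k by simp
    then have "lam \<bullet> \<beta> = 0"
      using root_nonzero[OF \<beta>] by (simp add: inner_coroot)
    then show ?thesis by simp
  qed
qed

lemma hyp_D_orbit_sum:
  assumes "lam \<in> dominant_weights R Rp"
  shows "hyp_D Rp g (orbit_sum R lam) x
    = complex_of_real (lam \<bullet> lam + (\<Sum>\<alpha>\<in>Rp. g \<alpha> * (lam \<bullet> \<alpha>))) * ev (orbit_sum R lam) x
      + complex_of_real (1 / real (card (stabilizer R lam)))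
        * (\<Sum>\<beta>\<in>Rp. complex_of_real (g \<beta> * (lam \<bullet> \<beta>))
          * (\<Sum>j\<in>{1..<nat \<lfloor>lam \<bullet> coroot \<beta>\<rfloor>}. weyl_exp_sum (lam - real j *\<^sub>R \<beta>) x))"
proof -
  define a where "a \<beta> = complex_of_real (g \<beta> * (lam \<bullet> \<beta>))" for \<beta>
  define c where "c = complex_of_real (1 / real (card (stabilizer R lam)))"
  define S where "S \<beta> = (\<Sum>j\<in>{1..<nat \<lfloor>lam \<bullet> coroot \<beta>\<rfloor>}. weyl_exp_sum (lam - real j *\<^sub>R \<beta>) x)" for \<beta>
  have M: "c * weyl_exp_sum lam x = ev (orbit_sum R lam) x"
    unfolding c_def weyl_exp_sum_eq using card_stabilizer_pos[of lam] by simp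
  have "hyp_D Rp g (orbit_sum R lam) x
      = complex_of_real (lam \<bullet> lam) * ev (orbit_sum R lam) x
        + c * (\<Sum>\<beta>\<in>Rp. a \<beta> * (weyl_exp_sum lam x + S \<beta>))"
    unfolding hyp_D_def laplacian_orbit_sum first_order_orbit_sum a_def c_def S_def
    using sum_weyl_hyp_coeff_dominant[OF assms] by (auto intro!: sum.cong)
  also have "c * (\<Sum>\<beta>\<in>Rp. a \<beta> * (weyl_exp_sum lam x + S \<beta>))
      = (\<Sum>\<beta>\<in>Rp. c * (a \<beta> * weyl_exp_sum lam x)) + c * (\<Sum>\<beta>\<in>Rp. a \<beta> * S \<beta>)"
    by (simp add: distrib_left sum.distrib sum_distrib_left)
  also have "(\<Sum>\<beta>\<in>Rp. c * (a \<beta> * weyl_exp_sum lam x)) = (\<Sum>\<beta>\<in>Rp. a \<beta>) * ev (orbit_sum R lam) x"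
    unfolding sum_distrib_right by (rule sum.cong[OF refl]) (metis M mult.left_commute)
  finally show ?thesis
    unfolding of_real_add of_real_sum a_def[symmetric] c_def[symmetric] S_def[symmetric]
    by (simp add: algebra_simps)
qed

lemma dominant_string_fold:
  assumes "lam \<in> dominant_weights R Rp" "\<alpha> \<in> Rp"
  shows "(\<Sum>l\<in>{1..nat \<lfloor>(lam \<bullet> coroot \<alpha>) / 2\<rfloor>}.
      complex_of_real (real (card (stabilizer R (lam - real l *\<^sub>R \<alpha>)))
        * real (card {lam - real l *\<^sub>R \<alpha>, refl \<alpha> (lam - real l *\<^sub>R \<alpha>)}))
      * ev (orbit_sum R (lam - real l *\<^sub>R \<alpha>)) x)
    = (\<Sum>j\<in>{1..<nat \<lfloor>lam \<bullet> coroot \<alpha>\<rfloor>}. weyl_exp_sum (lam - real j *\<^sub>R \<alpha>) x)"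
proof -
  have k: "lam \<bullet> coroot \<alpha> = real (nat \<lfloor>lam \<bullet> coroot \<alpha>\<rfloor>)"
    using dominant_coroot_nat[OF assms(1) positive_roots_subset assms(2)] .
  show ?thesis
    unfolding nat_floor_half[OF k] using sum_string_fold[OF _ k] positive_roots_subset assms(2) by blast
qed

end

theorem mainTheorem4:
  fixes R Rp :: "'a::euclidean_space set" and g :: "'a \<Rightarrow> real" and lam x :: 'a
  assumes "root_system R" and "irreducible_rs R" and "positive_system R Rp"
    and "\<forall>w\<in>weyl_group R. \<forall>\<alpha>\<in>R. g (w \<alpha>) = g \<alpha>"
    and "lam \<in> dominant_weights R Rp"
    and "\<forall>\<alpha>\<in>Rp. expo (-\<alpha>) x \<noteq> 1"
  shows "hyp_D Rp g (orbit_sum R lam) x =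
     complex_of_real ((lam + rho_g Rp g) \<bullet> (lam + rho_g Rp g) - rho_g Rp g \<bullet> rho_g Rp g)
       * ev (orbit_sum R lam) x
     + complex_of_real (1 / real (card (stabilizer R lam)))
       * (\<Sum>\<alpha>\<in>Rp. complex_of_real (g \<alpha> * (lam \<bullet> \<alpha>))
           * (\<Sum>l\<in>{1..nat \<lfloor>(lam \<bullet> coroot \<alpha>) / 2\<rfloor>}.
                complex_of_real (real (card (stabilizer R (lam - real l *\<^sub>R \<alpha>)))
                  * real (card {lam - real l *\<^sub>R \<alpha>, refl \<alpha> (lam - real l *\<^sub>R \<alpha>)}))
                * ev (orbit_sum R (lam - real l *\<^sub>R \<alpha>)) x))"
proof -
  interpret hypergeometric R Rp g x
    using assms(1,3,4,6) by unfold_locales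
  show ?thesis
    unfolding hyp_D_orbit_sum[OF assms(5)] rho_g_shift_norm
    by (simp only: dominant_string_fold[OF assms(5)] cong: sum.cong)
qed

end
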